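(* Let $\mathbb{K}$ be a totally ordered field which is non-Archimedean and Cantor $\kappa$-complete for a cardinal $\kappa$. Then $\kappa\le\mathrm{card}(\mathbb{K})$.
   Context: For a cardinal $\kappa$, $\mathbb{K}$ is Cantor $\kappa$-complete if every family of fewer than $\kappa$ closed bounded intervals in $\mathbb{K}$ with the finite intersection property has non-empty intersection. Archimedean: for every $x$ there is $n\in\mathbb{N}$ with $|x|<n$. *)

theory Defs
  imports Main
begin

definition archimedean_field :: "'a::linordered_field itself \<Rightarrow> bool" where
  "archimedean_field _ \<longleftrightarrow> (\<forall>x::'a. \<exists>n::nat. \<bar>x\<bar> < of_nat n)"

definition closed_bounded_interval :: "'a::linorder set \<Rightarrow> bool" where
  "closed_bounded_interval S \<longleftrightarrow> (\<exists>a b. a \<le> b \<and> S = {a..b})"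

definition fip :: "'a set set \<Rightarrow> bool" where
  "fip F \<longleftrightarrow> (\<forall>G. G \<subseteq> F \<longrightarrow> finite G \<longrightarrow> G \<noteq> {} \<longrightarrow> \<Inter>G \<noteq> {})"

definition cantor_complete :: "'b rel \<Rightarrow> 'a::linordered_field itself \<Rightarrow> bool" where
  "cantor_complete \<kappa> _ \<longleftrightarrow>
     (\<forall>F :: 'a set set. (card_of F, \<kappa>) \<in> ordLess \<longrightarrow>
        (\<forall>S\<in>F. closed_bounded_interval S) \<longrightarrow> fip F \<longrightarrow> \<Inter>F \<noteq> {})"

end

theory Submission
  imports Defs
begin

(* In a non-Archimedean ordered field K there is an infinitely large
   element H (one exceeding every natural number). To every y in K we attach a
   closed bounded interval "gap_interval H y": [0, y - 1] if y is infinitely large,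
   and [y + 1, H] otherwise. Any finitely many of these intervals contain a common
   natural number (larger than the finitely many finite indices involved), so the
   family has the finite intersection property; but no z lies in its own interval
   gap_interval H z, so the whole family has empty intersection. The family is
   indexed by K, hence has cardinality at most card K. If kappa were larger than
   card K, Cantor kappa-completeness would force a nonempty intersection, which is
   impossible; hence kappa <= card K. *)

definition infinitely_large :: "'a::linordered_field \<Rightarrow> bool" where
  "infinitely_large y \<longleftrightarrow> (\<forall>n::nat. of_nat n < y)"

text \<open>A non-Archimedean ordered field contains an infinitely large element:
  take the successor of the absolute value of a witness of non-Archimedeanity.\<close>
lemma non_archimedean_infinitely_large:
  assumes "\<not> archimedean_field TYPE('a)"
  obtains H :: "'a::linordered_field" where "infinitely_large H"
proof -
  from assms obtain x :: 'a where x: "\<And>n::nat. of_nat n \<le> \<bar>x\<bar>"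
    unfolding archimedean_field_def by (auto simp: not_less)
  have "infinitely_large (\<bar>x\<bar> + 1)"
    unfolding infinitely_large_def using x less_add_one order_le_less_trans by blast
  then show ?thesis by (rule that)
qed

text \<open>Finitely many elements, each bounded by a natural number, have a common
  natural bound (the sum of the individual bounds).\<close>
lemma finite_common_nat_bound:
  fixes B :: "'a::linordered_semidom set"
  assumes "finite B" and "\<And>y. y \<in> B \<Longrightarrow> \<exists>n::nat. y \<le> of_nat n"
  obtains N :: nat where "\<And>y. y \<in> B \<Longrightarrow> y \<le> of_nat N"
proof -
  from assms(2) obtain f :: "'a \<Rightarrow> nat" where f: "\<And>y. y \<in> B \<Longrightarrow> y \<le> of_nat (f y)"
    by metis
  have "y \<le> of_nat (sum f B)" if "y \<in> B" for y
  proof -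
    have "f y \<le> sum f B" using assms(1) that by (simp add: member_le_sum)
    then show ?thesis using f[OF that] order_trans of_nat_mono by blast
  qed
  then show ?thesis by (rule that)
qed

definition gap_interval :: "'a::linordered_field \<Rightarrow> 'a \<Rightarrow> 'a set" where
  "gap_interval H y = (if infinitely_large y then {0..y - 1} else {y + 1..H})"

lemma gap_interval_closed_bounded:
  assumes "infinitely_large H"
  shows "closed_bounded_interval (gap_interval H y)"
proof (cases "infinitely_large y")
  case True
  then have "of_nat 1 < y" unfolding infinitely_large_def by blast
  then have "0 \<le> y - 1" by simp
  then show ?thesis using True unfolding gap_interval_def closed_bounded_interval_def by auto
next
  case False
  then obtain n :: nat where "y \<le> of_nat n" unfolding infinitely_large_def by (auto simp: not_less)
  moreover have "of_nat (Suc n) < H" using assms unfolding infinitely_large_def by blast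
  ultimately have "y + 1 \<le> H" by simp
  then show ?thesis using False unfolding gap_interval_def closed_bounded_interval_def by auto
qed

text \<open>Finitely many gap intervals share a natural number: one above all finite
  indices involved (and automatically below all infinitely large ones).\<close>
lemma gap_intervals_fip:
  assumes "infinitely_large H"
  shows "fip (range (gap_interval H))"
  unfolding fip_def
proof (intro allI impI)
  fix G assume G: "G \<subseteq> range (gap_interval H)" "finite G" "G \<noteq> {}"
  then obtain A where A: "finite A" "G = gap_interval H ` A"
    by (meson finite_subset_image)
  let ?finite_indices = "{y\<in>A. \<not> infinitely_large y}"
  have "finite ?finite_indices" using A(1) by simp
  moreover have "\<exists>n::nat. y \<le> of_nat n" if "y \<in> ?finite_indices" for y
    using that unfolding infinitely_large_def by (auto simp: not_less)
  ultimately obtain N :: nat where "\<And>y. y \<in> ?finite_indices \<Longrightarrow> y \<le> of_nat N"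
    using finite_common_nat_bound[of ?finite_indices] by blast
  then have N: "\<And>y. y \<in> A \<Longrightarrow> \<not> infinitely_large y \<Longrightarrow> y \<le> of_nat N" by blast
  have "of_nat (Suc N) \<in> gap_interval H y" if "y \<in> A" for y
  proof (cases "infinitely_large y")
    case True
    then have "of_nat (Suc (Suc N)) < y" unfolding infinitely_large_def by blast
    then show ?thesis using True unfolding gap_interval_def by auto
  next
    case False
    have "of_nat (Suc N) < H" using assms unfolding infinitely_large_def by blast
    then show ?thesis using False N[OF that] unfolding gap_interval_def by auto
  qed
  then show "\<Inter>G \<noteq> {}" using A(2) by blast
qed

text \<open>No element lies in its own gap interval, so the family has empty intersection.\<close>
lemma gap_intervals_empty_Inter: "\<Inter>(range (gap_interval H)) = {}"
proof -
  have "z \<notin> gap_interval H z" for z :: "'a::linordered_field"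
    unfolding gap_interval_def by auto
  then show ?thesis by blast
qed

theorem mainTheorem15:
  fixes \<kappa> :: "'b rel"
  assumes "Card_order \<kappa>"
    and "\<not> archimedean_field TYPE('a::linordered_field)"
    and "cantor_complete \<kappa> TYPE('a)"
  shows "(\<kappa>, card_of (UNIV :: 'a set)) \<in> ordLeq"
proof (rule ccontr)
  assume "(\<kappa>, card_of (UNIV :: 'a set)) \<notin> ordLeq"
  then have small_field: "(card_of (UNIV :: 'a set), \<kappa>) \<in> ordLess"
    using assms(1) not_ordLeq_iff_ordLess card_of_Well_order card_order_on_well_order_on
    by blast
  obtain H :: 'a where H: "infinitely_large H"
    using assms(2) by (rule non_archimedean_infinitely_large)
  let ?F = "range (gap_interval H)"
  have "(card_of ?F, \<kappa>) \<in> ordLess"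
    using card_of_image small_field by (rule ordLeq_ordLess_trans)
  moreover have "\<forall>S\<in>?F. closed_bounded_interval S"
    using gap_interval_closed_bounded[OF H] by blast
  ultimately have "\<Inter>?F \<noteq> {}"
    using assms(3) gap_intervals_fip[OF H] unfolding cantor_complete_def by blast
  then show False by (simp add: gap_intervals_empty_Inter)
qed

end
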